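(* Let $\Gamma$ and $\Xi$ be as in the context. For any $\gamma,\gamma_1,\gamma_2\in\Gamma$ and $\xi_1,\xi_2\in\Xi$, $$d_o^2(\gamma_1\xi_1\infty,\gamma_2\xi_2\infty)\,\tilde h(\gamma_1\xi_1\infty)\,\tilde h(\gamma_2\xi_2\infty)=d_o^2(\gamma\gamma_1\xi_1\infty,\gamma\gamma_2\xi_2\infty)\,\tilde h(\gamma\gamma_1\xi_1\infty)\,\tilde h(\gamma\gamma_2\xi_2\infty).$$
   Context: $n\ge2$, $G=\mathrm{SO}(n,1)$, $K\cong\mathrm{SO}(n)$ maximal compact, $\mathbb H^n=G/K$ with hyperbolic distance $d$, $o=K$. $A$ a one-parameter $\mathbb R$-split torus, $M=Z_G(A)\cap K$, $N$ the expanding horospherical subgroup, $P=MAN$; $\partial\mathbb H^n=G/P\cong\mathbb R^{n-1}\cup\{\infty\}$ with $\infty=P$. $\Gamma\subset G$ discrete with finite covolume and $\Xi\subset G$ a finite set (containing $e$) of cusp representatives; $\gamma\xi\infty$ are the cusps. Busemann function: $B_\zeta(x,y)=\lim_{t\to\infty}(d(x,\zeta(t))-d(y,\zeta(t)))$ for a geodesic ray $\zeta(t)\to\zeta$. Busemann height: $\tilde h(\gamma\xi\infty)=\exp(B_{\xi\infty}(\gamma^{-1}o,o))$ (defined via the pair $(\gamma,\xi)$). Gromov metric: $d_o(\zeta_1,\zeta_2)=\exp\big(-\tfrac12\lim_{t\to\infty}(B_{\zeta_1}(o,\zeta(t))+B_{\zeta_2}(o,\zeta(t)))\big)$ with $\zeta(t)$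 a geodesic ray converging to $\zeta_1$. *)

theory Defs
  imports "HOL-Analysis.Analysis"
begin

text \<open>Hyperboloid model. Minkowski space is real^('n option); the coordinate None is the
time coordinate, the coordinates Some i (i :: 'n) are the space coordinates, so n = CARD('n).\<close>

type_synonym 'n mvec = "real ^ ('n option)"
type_synonym 'n mmat = "real ^ ('n option) ^ ('n option)"

definition mink :: "'n::finite mvec \<Rightarrow> 'n mvec \<Rightarrow> real" where
  "mink x y = x $ None * y $ None - (\<Sum>i\<in>(UNIV::'n set). x $ Some i * y $ Some i)"

definition minkJ :: "'n::finite mmat" where
  "minkJ = (\<chi> i j. if i = j then (if i = None then 1 else -1) else 0)"

definition hyp :: "'n::finite mvec set" where
  "hyp = {x. mink x x = 1 \<and> x $ None > 0}"

definition hdist :: "'n::finite mvec \<Rightarrow> 'n mvec \<Rightarrow> real" where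
  "hdist x y = arcosh (mink x y)"

text \<open>G = SO(n,1) (identity component): determinant one, preserving the Minkowski form and
the upper sheet. Elements act on hyp by matrix-vector multiplication.\<close>
definition SOn1 :: "'n::finite mmat set" where
  "SOn1 = {A. transpose A ** minkJ ** A = minkJ \<and> det A = 1 \<and> A $ None $ None > 0}"

text \<open>Boundary at infinity: null directions, normalised to time coordinate 1.\<close>
definition bdry :: "'n::finite mvec set" where
  "bdry = {p. p $ None = 1 \<and> mink p p = 0}"

definition normz :: "'n::finite mvec \<Rightarrow> 'n mvec" where
  "normz x = (1 / x $ None) *\<^sub>R x"

definition bd_act :: "'n::finite mmat \<Rightarrow> 'n mvec \<Rightarrow> 'n mvec" where
  "bd_act A p = normz (A *v p)"

definition georay :: "(real \<Rightarrow> 'n::finite mvec) \<Rightarrow> bool" where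
  "georay r \<longleftrightarrow> (\<forall>t. r t \<in> hyp) \<and>
     (\<forall>s t. 0 \<le> s \<longrightarrow> 0 \<le> t \<longrightarrow> hdist (r s) (r t) = \<bar>s - t\<bar>)"

definition ray_to :: "(real \<Rightarrow> 'n::finite mvec) \<Rightarrow> 'n mvec \<Rightarrow> bool" where
  "ray_to r \<zeta> \<longleftrightarrow> ((\<lambda>t. normz (r t)) \<longlongrightarrow> \<zeta>) at_top"

definition some_ray :: "'n::finite mvec \<Rightarrow> real \<Rightarrow> 'n mvec" where
  "some_ray \<zeta> = (SOME r. georay r \<and> ray_to r \<zeta>)"

definition busemann :: "'n::finite mvec \<Rightarrow> 'n mvec \<Rightarrow> 'n mvec \<Rightarrow> real" where
  "busemann \<zeta> x y = Lim at_top (\<lambda>t. hdist x (some_ray \<zeta> t) - hdist y (some_ray \<zeta> t))"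

text \<open>Gromov (visual) metric based at o; when the limit diverges (to +infinity, i.e.
zeta1 = zeta2) the value is exp(-infinity) = 0.\<close>
definition gromov :: "'n::finite mvec \<Rightarrow> 'n mvec \<Rightarrow> 'n mvec \<Rightarrow> real" where
  "gromov o' \<zeta>1 \<zeta>2 =
     (let f = (\<lambda>t. busemann \<zeta>1 o' (some_ray \<zeta>1 t) + busemann \<zeta>2 o' (some_ray \<zeta>1 t))
      in if (\<exists>L. (f \<longlongrightarrow> L) at_top) then exp (- (Lim at_top f) / 2) else 0)"

definition htilde :: "'n::finite mvec \<Rightarrow> 'n mvec \<Rightarrow> 'n mmat \<Rightarrow> 'n mmat \<Rightarrow> real" where
  "htilde o' infty \<gamma> \<xi> = exp (busemann (bd_act \<xi> infty) (matrix_inv \<gamma> *v o') o')"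

definition discrete_subgroup :: "'n::finite mmat set \<Rightarrow> bool" where
  "discrete_subgroup \<Gamma> \<longleftrightarrow> \<Gamma> \<subseteq> SOn1 \<and> mat 1 \<in> \<Gamma> \<and>
     (\<forall>g\<in>\<Gamma>. \<forall>h\<in>\<Gamma>. g ** h \<in> \<Gamma>) \<and> (\<forall>g\<in>\<Gamma>. matrix_inv g \<in> \<Gamma>) \<and>
     (\<forall>g\<in>\<Gamma>. \<exists>e>0. \<forall>h\<in>\<Gamma>. dist h g < e \<longrightarrow> h = g)"

text \<open>Coordinates on hyp by the space part u; hyperbolic volume density is
1/sqrt(1+|u|^2) du.\<close>
definition lift :: "real ^ 'n \<Rightarrow> 'n::finite mvec" where
  "lift u = (\<chi> i. case i of None \<Rightarrow> sqrt (1 + (norm u)\<^sup>2) | Some j \<Rightarrow> u $ j)"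

definition proj :: "'n::finite mvec \<Rightarrow> real ^ 'n" where
  "proj x = (\<chi> j. x $ Some j)"

definition finite_covolume :: "'n::finite mmat set \<Rightarrow> bool" where
  "finite_covolume \<Gamma> \<longleftrightarrow> (\<exists>F. F \<in> sets lebesgue \<and>
     (\<forall>u. \<exists>g\<in>\<Gamma>. proj (g *v lift u) \<in> F) \<and>
     (\<forall>g\<in>\<Gamma>. g \<noteq> mat 1 \<longrightarrow>
        F \<inter> {u. proj (matrix_inv g *v lift u) \<in> F} \<in> null_sets lebesgue) \<and>
     (\<integral>\<^sup>+ u. indicator F u * ennreal (1 / sqrt (1 + (norm u)\<^sup>2)) \<partial>lebesgue) < \<infinity>)"

definition parabolic :: "'n::finite mmat \<Rightarrow> bool" where
  "parabolic g \<longleftrightarrow> g \<in> SOn1 \<and> g \<noteq> mat 1 \<and> (\<forall>x\<in>hyp. g *v x \<noteq> x) \<and>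
     (\<exists>!p. p \<in> bdry \<and> bd_act g p = p)"

definition cusps :: "'n::finite mmat set \<Rightarrow> 'n mvec set" where
  "cusps \<Gamma> = {p \<in> bdry. \<exists>g\<in>\<Gamma>. parabolic g \<and> bd_act g p = p}"

definition cusp_reps :: "'n::finite mmat set \<Rightarrow> 'n mvec \<Rightarrow> 'n mmat set \<Rightarrow> bool" where
  "cusp_reps \<Gamma> infty \<Xi> \<longleftrightarrow> finite \<Xi> \<and> mat 1 \<in> \<Xi> \<and> \<Xi> \<subseteq> SOn1 \<and>
     cusps \<Gamma> = {bd_act (\<gamma> ** \<xi>) infty | \<gamma> \<xi>. \<gamma> \<in> \<Gamma> \<and> \<xi> \<in> \<Xi>} \<and>
     (\<forall>\<xi>\<in>\<Xi>. \<forall>\<xi>'\<in>\<Xi>. (\<exists>\<gamma>\<in>\<Gamma>. bd_act (\<gamma> ** \<xi>) infty = bd_act \<xi>' infty) \<longrightarrow> \<xi> = \<xi>')"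

end

theory Submission
  imports Defs "HOL-Real_Asymp.Real_Asymp"
begin

text \<open>Along the ray \<open>r t = e\<^sup>-\<^sup>t x + (sinh t / \<langle>x,\<zeta>\<rangle>) \<zeta>\<close> one finds
\<open>B\<^sub>\<zeta>(y,z) = ln \<langle>y,\<zeta>\<rangle> - ln \<langle>z,\<zeta>\<rangle>\<close>, and hence
\<open>d\<^sub>o(\<zeta>\<^sub>1,\<zeta>\<^sub>2)\<^sup>2 = \<langle>\<zeta>\<^sub>1,\<zeta>\<^sub>2\<rangle> / (2 \<langle>o,\<zeta>\<^sub>1\<rangle> \<langle>o,\<zeta>\<^sub>2\<rangle>)\<close> and
\<open>h\<^sup>~(A\<xi>\<infinity>) = \<langle>o,Aq\<rangle> / \<langle>o,q\<rangle>\<close> for \<open>q = \<xi>\<infinity>\<close>. Both expressions are homogeneous of degree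
zero in the null vectors, so the normalisation of boundary points drops out and
\<open>d\<^sub>o\<^sup>2(A\<^sub>1q\<^sub>1,A\<^sub>2q\<^sub>2) h\<^sup>~ h\<^sup>~ = \<langle>A\<^sub>1q\<^sub>1,A\<^sub>2q\<^sub>2\<rangle> / (2 \<langle>o,q\<^sub>1\<rangle> \<langle>o,q\<^sub>2\<rangle>)\<close>. Replacing \<open>A\<^sub>i\<close> by
\<open>\<gamma>A\<^sub>i\<close> does not change this, as \<open>\<gamma>\<close> preserves the Minkowski form.\<close>

lemma sum_UNIV_option:
  "(\<Sum>i\<in>(UNIV::'n::finite option set). f i) = f None + (\<Sum>j\<in>UNIV. f (Some j))"
  by (simp add: UNIV_option_conv sum.reindex)

lemma mink_eq_proj: "mink x y = x $ None * y $ None - proj x \<bullet> proj y"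
  by (simp add: mink_def proj_def inner_vec_def)

lemma mink_self_eq: "mink x x = (x $ None)\<^sup>2 - (norm (proj x))\<^sup>2"
  by (simp add: mink_eq_proj dot_square_norm power2_eq_square)

lemma mink_commute: "mink x y = mink y x"
  by (simp add: mink_def mult.commute)

lemma mink_add_left: "mink (y + z) x = mink y x + mink z x"
  by (simp add: mink_def algebra_simps sum.distrib)

lemma mink_add_right: "mink x (y + z) = mink x y + mink x z"
  by (simp add: mink_def algebra_simps sum.distrib)

lemma mink_diff_left: "mink (y - z) x = mink y x - mink z x"
  by (simp add: mink_def algebra_simps sum_subtractf)

lemma mink_diff_right: "mink x (y - z) = mink x y - mink x z"
  by (simp add: mink_def algebra_simps sum_subtractf)

lemma mink_scaleR_left: "mink (c *\<^sub>R y) x = c * mink y x"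
  by (simp add: mink_def algebra_simps sum_distrib_left)

lemma mink_scaleR_right: "mink x (c *\<^sub>R y) = c * mink x y"
  by (simp add: mink_def algebra_simps sum_distrib_left)

lemmas mink_linear =
  mink_add_left mink_add_right mink_diff_left mink_diff_right mink_scaleR_left mink_scaleR_right

lemma mink_tendsto:
  assumes "(f \<longlongrightarrow> a) F"
  shows "((\<lambda>x. mink v (f x)) \<longlongrightarrow> mink v a) F"
  unfolding mink_def by (intro tendsto_intros assms)

lemma minkJ_mult_vector: "minkJ *v y = (\<chi> i. if i = None then y $ i else - y $ i)"
proof -
  have "(\<Sum>j\<in>UNIV. (if i = j then (if i = None then 1 else -1) else 0) * y $ j) =
        (if i = None then y $ i else - y $ i)" for i
    by (simp add: if_distrib[of "\<lambda>c. c * _"] sum.delta cong: if_cong)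
  thus ?thesis by (simp add: minkJ_def matrix_vector_mult_def vec_eq_iff)
qed

lemma mink_eq_inner_minkJ: "mink x y = x \<bullet> (minkJ *v y)"
  by (simp add: mink_def minkJ_mult_vector inner_vec_def sum_UNIV_option sum_negf)

lemma inner_matrix_vector_transpose:
  "(A *v x) \<bullet> y = x \<bullet> (transpose A *v (y::real^'n::finite))"
  by (metis dot_lmul_matrix inner_commute vector_transpose_matrix transpose_transpose)

lemma mink_matrix_vector_invariant:
  assumes "transpose A ** minkJ ** A = minkJ"
  shows "mink (A *v x) (A *v y) = mink x y"
proof -
  have "mink (A *v x) (A *v y) = x \<bullet> (transpose A *v (minkJ *v (A *v y)))"
    by (simp add: mink_eq_inner_minkJ inner_matrix_vector_transpose)
  also have "\<dots> = x \<bullet> ((transpose A ** minkJ ** A) *v y)"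
    by (simp add: matrix_vector_mul_assoc matrix_mul_assoc)
  finally show ?thesis using assms by (simp add: mink_eq_inner_minkJ)
qed

lemma hypD:
  assumes "x \<in> hyp"
  shows "(x $ None)\<^sup>2 = 1 + (norm (proj x))\<^sup>2" "x $ None > 0" "norm (proj x) < x $ None"
proof -
  show sq: "(x $ None)\<^sup>2 = 1 + (norm (proj x))\<^sup>2"
    using assms mink_self_eq[of x] by (simp add: hyp_def)
  show pos: "x $ None > 0" using assms by (simp add: hyp_def)
  have "(norm (proj x))\<^sup>2 < (x $ None)\<^sup>2" using sq by simp
  thus "norm (proj x) < x $ None"
    using pos power_less_imp_less_base[of "norm (proj x)" 2 "x $ None"] by linarith
qed

lemma bdryD:
  assumes "p \<in> bdry"
  shows "p $ None = 1" "norm (proj p) = 1" "mink p p = 0"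
proof -
  show "p $ None = 1" "mink p p = 0" using assms by (simp_all add: bdry_def)
  have "(norm (proj p))\<^sup>2 = 1" using assms mink_self_eq[of p] by (auto simp add: bdry_def)
  thus "norm (proj p) = 1"
    using norm_ge_zero[of "proj p"] power2_eq_1_iff[of "norm (proj p)"] by linarith
qed

lemma mink_hyp_ge_1:
  assumes "x \<in> hyp" "y \<in> hyp"
  shows "mink x y \<ge> 1"
proof -
  define a where "a = norm (proj x)"
  define b where "b = norm (proj y)"
  have "(1 + a * b)\<^sup>2 \<le> (1 + a\<^sup>2) * (1 + b\<^sup>2)"
  proof -
    have "(1 + a\<^sup>2) * (1 + b\<^sup>2) - (1 + a * b)\<^sup>2 = (a - b)\<^sup>2"
      by (simp add: power2_eq_square algebra_simps)
    thus ?thesis using zero_le_power2[of "a - b"] by linarith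
  qed
  also have "\<dots> = (x $ None * y $ None)\<^sup>2"
    using hypD(1)[OF assms(1)] hypD(1)[OF assms(2)] by (simp add: a_def b_def power_mult_distrib)
  finally have "(1 + a * b)\<^sup>2 \<le> (x $ None * y $ None)\<^sup>2" .
  moreover have "0 \<le> x $ None * y $ None" using hypD(2)[OF assms(1)] hypD(2)[OF assms(2)] by simp
  ultimately have "1 + a * b \<le> x $ None * y $ None" by (rule power2_le_imp_le)
  moreover have "proj x \<bullet> proj y \<le> a * b"
    unfolding a_def b_def by (rule norm_cauchy_schwarz)
  ultimately show ?thesis by (simp add: mink_eq_proj)
qed

lemma mink_hyp_bdry_pos:
  assumes "x \<in> hyp" "p \<in> bdry"
  shows "mink x p > 0"
proof -
  have "proj x \<bullet> proj p \<le> norm (proj x) * norm (proj p)" by (rule norm_cauchy_schwarz)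
  thus ?thesis using hypD[OF assms(1)] bdryD[OF assms(2)] by (simp add: mink_eq_proj)
qed

lemma mink_bdry_nonneg:
  assumes "p \<in> bdry" "q \<in> bdry"
  shows "mink p q \<ge> 0"
proof -
  have "proj p \<bullet> proj q \<le> norm (proj p) * norm (proj q)" by (rule norm_cauchy_schwarz)
  thus ?thesis using bdryD[OF assms(1)] bdryD[OF assms(2)] by (simp add: mink_eq_proj)
qed

lemma null_orthogonal_timelike_eq_0:
  assumes "x \<in> hyp" "mink x n = 0" "mink n n = 0"
  shows "n = 0"
proof -
  have "(norm (proj n))\<^sup>2 = (n $ None)\<^sup>2" using assms(3) mink_self_eq[of n] by simp
  hence norm_n: "norm (proj n) = \<bar>n $ None\<bar>"
    by (metis norm_ge_zero real_sqrt_abs real_sqrt_unique)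
  have "x $ None * n $ None = proj x \<bullet> proj n" using assms(2) by (simp add: mink_eq_proj)
  hence "x $ None * \<bar>n $ None\<bar> = \<bar>proj x \<bullet> proj n\<bar>"
    using hypD(2)[OF assms(1)] by (metis abs_mult abs_of_pos)
  also have "\<dots> \<le> norm (proj x) * \<bar>n $ None\<bar>"
    using Cauchy_Schwarz_ineq2[of "proj x" "proj n"] norm_n by simp
  finally have le: "x $ None * \<bar>n $ None\<bar> \<le> norm (proj x) * \<bar>n $ None\<bar>" .
  have "n $ None = 0"
  proof (rule ccontr)
    assume "n $ None \<noteq> 0"
    hence "norm (proj x) * \<bar>n $ None\<bar> < x $ None * \<bar>n $ None\<bar>"
      using hypD(3)[OF assms(1)] by (intro mult_strict_right_mono) simp_all
    with le show False by linarith
  qed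
  moreover have "proj n = 0" using norm_n calculation by simp
  hence "n $ Some j = 0" for j by (metis proj_def vec_lambda_beta zero_index)
  ultimately show "n = 0" by (metis vec_eq_iff zero_index option.exhaust)
qed

lemma future_causal_time_pos:
  assumes "c \<in> hyp" "mink w w \<ge> 0" "mink c w > 0"
  shows "w $ None > 0"
proof (rule ccontr)
  assume nonpos: "\<not> w $ None > 0"
  have "(norm (proj w))\<^sup>2 \<le> (w $ None)\<^sup>2" using assms(2) mink_self_eq[of w] by simp
  hence "norm (proj w) \<le> \<bar>w $ None\<bar>" by (metis abs_le_square_iff abs_norm_cancel)
  hence "norm (proj c) * norm (proj w) \<le> c $ None * \<bar>w $ None\<bar>"
    using hypD[OF assms(1)] by (intro mult_mono) auto
  hence "mink c w \<le> c $ None * w $ None + c $ None * \<bar>w $ None\<bar>"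
    using Cauchy_Schwarz_ineq2[of "proj c" "proj w"] by (simp add: mink_eq_proj)
  also have "\<dots> = 0" using nonpos by simp
  finally show False using assms(3) by simp
qed

definition hyp_origin :: "'n::finite mvec" where
  "hyp_origin = (\<chi> i. if i = None then 1 else 0)"

lemma hyp_origin_in_hyp: "hyp_origin \<in> hyp"
  by (simp add: hyp_def mink_def hyp_origin_def)

lemma mink_hyp_origin [simp]: "mink hyp_origin y = y $ None"
  by (simp add: mink_def hyp_origin_def)

lemma hyp_origin_time [simp]: "hyp_origin $ None = 1"
  by (simp add: hyp_origin_def)

lemma SOn1_mink:
  assumes "A \<in> SOn1"
  shows "mink (A *v x) (A *v y) = mink x y"
  using assms mink_matrix_vector_invariant by (auto simp: SOn1_def matrix_mul_assoc)

lemma SOn1_hyp_origin: assumes "A \<in> SOn1" shows "A *v hyp_origin \<in> hyp"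
proof -
  have "(A *v hyp_origin) $ None = A $ None $ None"
    by (simp add: matrix_vector_mult_def hyp_origin_def if_distrib[of "\<lambda>c. _ * c"] sum.delta'
        cong: if_cong)
  thus ?thesis using assms SOn1_mink[OF assms, of hyp_origin hyp_origin] hyp_origin_in_hyp
    by (simp add: hyp_def SOn1_def)
qed

text \<open>An element of \<open>SO(n,1)\<close> maps the future cone to itself: the image of a future causal
vector \<open>w\<close> has positive product with \<open>A hyp_origin \<in> hyp\<close>.\<close>

lemma SOn1_time_pos:
  assumes "A \<in> SOn1" "mink w w \<ge> 0" "w $ None > 0"
  shows "(A *v w) $ None > 0"
proof (rule future_causal_time_pos[OF SOn1_hyp_origin[OF assms(1)]])
  show "mink (A *v w) (A *v w) \<ge> 0" using assms(2) by (simp add: SOn1_mink[OF assms(1)])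
  show "mink (A *v hyp_origin) (A *v w) > 0" using assms(3) by (simp add: SOn1_mink[OF assms(1)])
qed

lemma SOn1_hyp: assumes "A \<in> SOn1" "y \<in> hyp" shows "A *v y \<in> hyp"
proof -
  have "mink (A *v y) (A *v y) = 1" using assms(2) by (simp add: SOn1_mink[OF assms(1)] hyp_def)
  moreover have "(A *v y) $ None > 0"
    using assms(2) by (intro SOn1_time_pos[OF assms(1)]) (simp_all add: hyp_def)
  ultimately show ?thesis by (simp add: hyp_def)
qed

lemma bdry_normz: assumes "mink v v = 0" "v $ None > 0" shows "normz v \<in> bdry"
  using assms by (simp add: bdry_def normz_def mink_linear)

lemma normz_scaleR: assumes "s > 0" shows "normz (s *\<^sub>R v) = normz v"
  using assms by (simp add: normz_def)

lemma SOn1_bdry_time_pos: assumes "A \<in> SOn1" "q \<in> bdry" shows "(A *v q) $ None > 0"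
  using assms(2) by (intro SOn1_time_pos[OF assms(1)]) (simp_all add: bdryD)

lemma SOn1_bdry_null: assumes "A \<in> SOn1" "q \<in> bdry" shows "mink (A *v q) (A *v q) = 0"
  using assms(2) by (simp add: SOn1_mink[OF assms(1)] bdryD)

lemma bd_act_bdry: assumes "A \<in> SOn1" "q \<in> bdry" shows "bd_act A q \<in> bdry"
  unfolding bd_act_def using SOn1_bdry_time_pos[OF assms] SOn1_bdry_null[OF assms]
  by (rule bdry_normz[rotated])

lemma bd_act_mult:
  assumes "A \<in> SOn1" "\<xi> \<in> SOn1" "infty \<in> bdry"
  shows "bd_act (A ** \<xi>) infty = normz (A *v bd_act \<xi> infty)"
proof -
  define s where "s = (\<xi> *v infty) $ None"
  have s: "s > 0" unfolding s_def by (rule SOn1_bdry_time_pos[OF assms(2,3)])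
  have "\<xi> *v infty = s *\<^sub>R bd_act \<xi> infty"
    using s by (simp add: bd_act_def normz_def s_def)
  hence "(A ** \<xi>) *v infty = s *\<^sub>R (A *v bd_act \<xi> infty)"
    by (metis matrix_vector_mul_assoc matrix_vector_mult_scaleR)
  thus ?thesis using s by (simp add: bd_act_def normz_scaleR)
qed

lemma SOn1_matrix_inv: assumes "A \<in> SOn1" shows "A ** matrix_inv A = mat 1"
proof -
  have "invertible A" using assms by (simp add: SOn1_def invertible_det_nz)
  then obtain B where "A ** B = mat 1 \<and> B ** A = mat 1" by (auto simp: invertible_def)
  hence "A ** matrix_inv A = mat 1 \<and> matrix_inv A ** A = mat 1"
    unfolding matrix_inv_def by (rule someI)
  thus ?thesis by simp
qed

lemma SOn1_matrix_inv_hyp: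
  assumes "A \<in> SOn1" "o' \<in> hyp"
  shows "matrix_inv A *v o' \<in> hyp" "mink (matrix_inv A *v o') q = mink o' (A *v q)"
proof -
  define w where "w = matrix_inv A *v o'"
  have Aw: "A *v w = o'"
    using SOn1_matrix_inv[OF assms(1)] by (simp add: w_def matrix_vector_mul_assoc)
  show "mink (matrix_inv A *v o') q = mink o' (A *v q)"
    using SOn1_mink[OF assms(1), of w q] Aw by (simp add: w_def)
  have ww: "mink w w = 1" using SOn1_mink[OF assms(1), of w w] Aw assms(2) by (simp add: hyp_def)
  have "w $ None \<noteq> 0"
  proof
    assume "w $ None = 0"
    hence "mink w w \<le> 0" using mink_self_eq[of w] by simp
    thus False using ww by simp
  qed
  moreover have "\<not> w $ None < 0"
  proof
    assume "w $ None < 0"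
    hence "- w \<in> hyp" using ww by (simp add: hyp_def mink_def)
    hence "A *v (- w) \<in> hyp" by (rule SOn1_hyp[OF assms(1)])
    moreover have "A *v (- w) = - o'"
      using Aw by (simp add: matrix_vector_mult_def vec_eq_iff sum_negf)
    ultimately show False using assms(2) by (simp add: hyp_def)
  qed
  ultimately show "matrix_inv A *v o' \<in> hyp" using ww by (simp add: hyp_def w_def)
qed

lemma mink_hyp_null_pos:
  assumes "o' \<in> hyp" "mink P P = 0" "P $ None > 0"
  shows "mink o' P > 0"
proof -
  have "P = P $ None *\<^sub>R normz P" using assms(3) by (simp add: normz_def)
  hence "mink o' P = P $ None * mink o' (normz P)" by (metis mink_scaleR_right)
  moreover have "mink o' (normz P) > 0"
    using mink_hyp_bdry_pos[OF assms(1) bdry_normz[OF assms(2,3)]] .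
  ultimately show ?thesis using assms(3) by simp
qed

lemma cosh_abs_real: "cosh \<bar>x::real\<bar> = cosh x"
  by (cases "x \<ge> 0") simp_all

lemma arcosh_cosh_abs: "arcosh (cosh (x::real)) = \<bar>x\<bar>"
  using arcosh_cosh_real[of "\<bar>x\<bar>"] by (simp add: cosh_abs_real)

lemma georay_mink:
  assumes "georay r" "s \<ge> 0" "u \<ge> 0"
  shows "mink (r s) (r u) = cosh (s - u)"
proof -
  have hyp: "r s \<in> hyp" "r u \<in> hyp" using assms(1) by (simp_all add: georay_def)
  have "arcosh (mink (r s) (r u)) = \<bar>s - u\<bar>" using assms by (simp add: georay_def hdist_def)
  hence "cosh (arcosh (mink (r s) (r u))) = cosh (s - u)" by (simp add: cosh_abs_real)
  thus ?thesis using mink_hyp_ge_1[OF hyp] by simp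
qed

lemma georay_exists:
  assumes "\<zeta> \<in> bdry"
  shows "\<exists>r. georay r \<and> ray_to r \<zeta>"
proof -
  define r where "r t = exp (-t) *\<^sub>R hyp_origin + sinh t *\<^sub>R \<zeta>" for t :: real
  have mr: "mink (r s) (r t) = cosh (s - t)" for s t
  proof -
    have "mink (r s) (r t) = exp (-s) * exp (-t) + exp (-s) * sinh t + sinh s * exp (-t)"
      using bdryD[OF assms] by (simp add: r_def mink_linear mink_commute[of \<zeta> hyp_origin] algebra_simps)
    also have "\<dots> = cosh (s - t)"
      by (simp add: sinh_field_def cosh_field_def exp_diff exp_minus field_simps)
    finally show ?thesis .
  qed
  have time: "r t $ None = cosh t" for t
    using bdryD[OF assms] by (simp add: r_def sinh_field_def cosh_field_def field_simps)
  have "georay r"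
    unfolding georay_def hyp_def hdist_def using mr time by (simp add: arcosh_cosh_abs)
  moreover have "ray_to r \<zeta>"
  proof -
    have "((\<lambda>t::real. exp (-t) / cosh t) \<longlongrightarrow> 0) at_top" by real_asymp
    moreover have "((\<lambda>t::real. sinh t / cosh t) \<longlongrightarrow> 1) at_top" by real_asymp
    ultimately have "((\<lambda>t. (exp (-t) / cosh t) *\<^sub>R hyp_origin + (sinh t / cosh t) *\<^sub>R \<zeta>)
        \<longlongrightarrow> 0 *\<^sub>R hyp_origin + 1 *\<^sub>R \<zeta>) at_top"
      by (intro tendsto_intros)
    moreover have "normz (r t) = (exp (-t) / cosh t) *\<^sub>R hyp_origin + (sinh t / cosh t) *\<^sub>R \<zeta>" for t
      unfolding normz_def time by (simp add: r_def scaleR_add_right)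
    ultimately show ?thesis by (simp add: ray_to_def)
  qed
  ultimately show ?thesis by blast
qed

lemma some_ray:
  assumes "\<zeta> \<in> bdry"
  shows "georay (some_ray \<zeta>)" "ray_to (some_ray \<zeta>) \<zeta>"
  using someI_ex[OF georay_exists[OF assms]] unfolding some_ray_def by auto

text \<open>Compare \<open>\<langle>r t, r T\<rangle> = cosh (T - t)\<close> with \<open>\<langle>r 0, r T\<rangle> = cosh T\<close> as \<open>T \<rightarrow> \<infinity>\<close>,
after dividing by the time coordinate of \<open>r T\<close>.\<close>

lemma georay_mink_bdry:
  assumes "georay r" "ray_to r \<zeta>" "t \<ge> 0"
  shows "mink (r t) \<zeta> = exp (-t) * mink (r 0) \<zeta>"
proof -
  have lim: "((\<lambda>T. mink v (normz (r T))) \<longlongrightarrow> mink v \<zeta>) at_top" for v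
    using assms(2) unfolding ray_to_def by (rule mink_tendsto)
  have lhs: "((\<lambda>T. mink (r t) (normz (r T)) * (2 * exp (-T) * cosh T)) \<longlongrightarrow> mink (r t) \<zeta> * 1) at_top"
    by (intro tendsto_intros lim) real_asymp
  have rhs: "((\<lambda>T. (2 * exp (-T) * cosh (T - t)) * mink (r 0) (normz (r T)))
               \<longlongrightarrow> exp (-t) * mink (r 0) \<zeta>) at_top"
    by (intro tendsto_intros lim) real_asymp
  have "eventually (\<lambda>T. (2 * exp (-T) * cosh (T - t)) * mink (r 0) (normz (r T)) =
          mink (r t) (normz (r T)) * (2 * exp (-T) * cosh T)) at_top"
    using eventually_ge_at_top[of t]
  proof eventually_elim
    case (elim T)
    have "mink (r t) (normz (r T)) * cosh T = cosh (T - t) * mink (r 0) (normz (r T))"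
      using georay_mink[OF assms(1), of t T] georay_mink[OF assms(1), of 0 T] assms(3) elim
      by (simp add: normz_def mink_linear cosh_minus[of "t - T", simplified])
    thus ?case by (simp add: algebra_simps)
  qed
  hence "((\<lambda>T. mink (r t) (normz (r T)) * (2 * exp (-T) * cosh T))
           \<longlongrightarrow> exp (-t) * mink (r 0) \<zeta>) at_top"
    by (rule Lim_transform_eventually[OF rhs])
  thus ?thesis using tendsto_unique[OF _ lhs] by simp
qed

text \<open>The difference \<open>n\<close> of the two sides is a null vector orthogonal to the timelike \<open>r 0\<close>.\<close>

lemma georay_eq:
  assumes "georay r" "ray_to r \<zeta>" "\<zeta> \<in> bdry" "t \<ge> 0"
  shows "r t = exp (-t) *\<^sub>R r 0 + (sinh t / mink (r 0) \<zeta>) *\<^sub>R \<zeta>"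
proof -
  define x where "x = r 0"
  define y where "y = exp (-t) *\<^sub>R x + (sinh t / mink x \<zeta>) *\<^sub>R \<zeta>"
  define n where "n = r t - y"
  have hyp: "r s \<in> hyp" for s using assms(1) by (simp add: georay_def)
  have pos: "mink x \<zeta> > 0" unfolding x_def by (rule mink_hyp_bdry_pos[OF hyp assms(3)])
  have xx: "mink x x = 1" and rr: "mink (r t) (r t) = 1" using hyp by (simp_all add: hyp_def x_def)
  have xr: "mink x (r t) = cosh t" using georay_mink[OF assms(1), of 0 t] assms(4) by (simp add: x_def)
  have rz: "mink (r t) \<zeta> = exp (-t) * mink x \<zeta>"
    unfolding x_def by (rule georay_mink_bdry[OF assms(1,2,4)])
  have zz: "mink \<zeta> \<zeta> = 0" using bdryD(3)[OF assms(3)] .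
  have "mink x n = 0"
    using pos by (simp add: n_def y_def mink_linear xx xr cosh_field_def sinh_field_def field_simps)
  moreover have "mink n n = 0"
  proof -
    have ry: "mink (r t) y = 1"
      using pos rz by (simp add: y_def mink_linear mink_commute[of "r t" x] xr cosh_field_def
          sinh_field_def exp_minus field_simps)
    have yy: "mink y y = 1"
      using pos zz by (simp add: y_def mink_linear xx mink_commute[of \<zeta> x] sinh_field_def
          exp_minus field_simps)
    show ?thesis using rr ry yy by (simp add: n_def mink_linear mink_commute[of y "r t"])
  qed
  ultimately have "n = 0" using null_orthogonal_timelike_eq_0[OF hyp[of 0]] by (simp add: x_def)
  thus ?thesis by (simp add: n_def y_def x_def)
qed

lemma georay_mink_eq:
  assumes "georay r" "ray_to r \<zeta>" "\<zeta> \<in> bdry" "t \<ge> 0"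
  shows "mink v (r t) = exp (-t) * mink v (r 0) + (sinh t / mink (r 0) \<zeta>) * mink v \<zeta>"
  by (subst georay_eq[OF assms]) (simp add: mink_linear)

lemma tendsto_arcosh_minus_ident:
  fixes p q :: real
  assumes "q > 0"
  shows "((\<lambda>t. arcosh (p * exp (-t) + q * sinh t) - t) \<longlongrightarrow> ln q) at_top"
proof -
  have ge_1: "eventually (\<lambda>t. p * exp (-t) + q * ((exp t - exp (-t)) / 2) \<ge> 1) at_top"
    using assms by real_asymp
  have "((\<lambda>t. ln (p * exp (-t) + q * ((exp t - exp (-t)) / 2) +
      sqrt ((p * exp (-t) + q * ((exp t - exp (-t)) / 2))\<^sup>2 - 1)) - t) \<longlongrightarrow> ln q) at_top"
    using assms by real_asymp
  thus ?thesis
    by (rule Lim_transform_eventually)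
       (use ge_1 in \<open>eventually_elim, simp add: arcosh_real_def sinh_field_def\<close>)
qed

lemma tendsto_ln_minus_ident:
  fixes p q :: real
  assumes "q > 0"
  shows "((\<lambda>t. ln (p * exp (-t) + q * sinh t) - t) \<longlongrightarrow> ln (q / 2)) at_top"
proof -
  have "((\<lambda>t. ln (p * exp (-t) + q * ((exp t - exp (-t)) / 2)) - t) \<longlongrightarrow> ln (q / 2)) at_top"
    using assms by real_asymp
  thus ?thesis by (simp only: sinh_field_def)
qed

lemma busemann_eq:
  assumes "\<zeta> \<in> bdry" "y \<in> hyp" "z \<in> hyp"
  shows "busemann \<zeta> y z = ln (mink y \<zeta>) - ln (mink z \<zeta>)"
proof -
  define r where "r = some_ray \<zeta>"
  have ray: "georay r" "ray_to r \<zeta>" using some_ray[OF assms(1)] by (simp_all add: r_def)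
  have pos: "mink (r 0) \<zeta> > 0"
    using ray(1) by (intro mink_hyp_bdry_pos[OF _ assms(1)]) (simp add: georay_def)
  have lim: "((\<lambda>t. hdist v (r t) - t) \<longlongrightarrow> ln (mink v \<zeta> / mink (r 0) \<zeta>)) at_top"
    if "v \<in> hyp" for v
  proof (rule Lim_transform_eventually)
    show "((\<lambda>t. arcosh (mink v (r 0) * exp (-t) + (mink v \<zeta> / mink (r 0) \<zeta>) * sinh t) - t)
            \<longlongrightarrow> ln (mink v \<zeta> / mink (r 0) \<zeta>)) at_top"
      using mink_hyp_bdry_pos[OF that assms(1)] pos by (intro tendsto_arcosh_minus_ident) simp
    show "eventually (\<lambda>t. arcosh (mink v (r 0) * exp (-t) + (mink v \<zeta> / mink (r 0) \<zeta>) * sinh t) - t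
            = hdist v (r t) - t) at_top"
      using eventually_ge_at_top[of 0]
    proof eventually_elim
      case (elim t)
      show ?case using georay_mink_eq[OF ray assms(1) elim, of v] by (simp add: hdist_def mult.commute)
    qed
  qed
  have "((\<lambda>t. (hdist y (r t) - t) - (hdist z (r t) - t)) \<longlongrightarrow>
          ln (mink y \<zeta> / mink (r 0) \<zeta>) - ln (mink z \<zeta> / mink (r 0) \<zeta>)) at_top"
    by (intro tendsto_intros lim assms)
  hence "((\<lambda>t. hdist y (r t) - hdist z (r t)) \<longlongrightarrow> ln (mink y \<zeta>) - ln (mink z \<zeta>)) at_top"
    using pos mink_hyp_bdry_pos[OF assms(2,1)] mink_hyp_bdry_pos[OF assms(3,1)]
    by (simp add: ln_div)
  thus ?thesis unfolding busemann_def r_def by (rule tendsto_Lim[rotated]) simp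
qed

lemma busemann_sum_along_ray:
  assumes "o' \<in> hyp" "\<zeta>1 \<in> bdry" "\<zeta>2 \<in> bdry" "t \<ge> 0"
  defines "x \<equiv> some_ray \<zeta>1 0"
  shows "busemann \<zeta>1 o' (some_ray \<zeta>1 t) + busemann \<zeta>2 o' (some_ray \<zeta>1 t)
       = ln (mink o' \<zeta>1 * mink o' \<zeta>2) + t
         - ln (mink x \<zeta>1 * mink x \<zeta>2 * exp (-t) + mink \<zeta>1 \<zeta>2 * sinh t)"
proof -
  define r where "r = some_ray \<zeta>1"
  have ray: "georay r" "ray_to r \<zeta>1" using some_ray[OF assms(2)] by (simp_all add: r_def)
  have hyp: "r s \<in> hyp" for s using ray(1) by (simp add: georay_def)
  have x: "x = r 0" by (simp add: x_def r_def)
  have pos: "mink o' \<zeta>1 > 0" "mink o' \<zeta>2 > 0" "mink x \<zeta>1 > 0" "mink (r t) \<zeta>2 > 0"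
    using mink_hyp_bdry_pos assms(1-3) hyp unfolding x by auto
  have r1: "mink (r t) \<zeta>1 = exp (-t) * mink x \<zeta>1"
    unfolding x by (rule georay_mink_bdry[OF ray assms(4)])
  have "mink \<zeta>2 (r t) = exp (-t) * mink \<zeta>2 x + (sinh t / mink x \<zeta>1) * mink \<zeta>2 \<zeta>1"
    unfolding x by (rule georay_mink_eq[OF ray assms(2,4)])
  hence "mink x \<zeta>1 * mink x \<zeta>2 * exp (-t) + mink \<zeta>1 \<zeta>2 * sinh t = mink x \<zeta>1 * mink (r t) \<zeta>2"
    using pos(3) by (simp add: mink_commute[of \<zeta>2 x] mink_commute[of \<zeta>2 "r t"] mink_commute[of \<zeta>2 \<zeta>1] field_simps)
  hence "ln (mink x \<zeta>1 * mink x \<zeta>2 * exp (-t) + mink \<zeta>1 \<zeta>2 * sinh t)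
      = ln (mink x \<zeta>1) + ln (mink (r t) \<zeta>2)"
    using pos(3,4) by (simp add: ln_mult)
  moreover have "busemann \<zeta>1 o' (r t) = ln (mink o' \<zeta>1) + t - ln (mink x \<zeta>1)"
    using busemann_eq[OF assms(2,1) hyp] r1 pos(3) by (simp add: ln_mult)
  moreover have "busemann \<zeta>2 o' (r t) = ln (mink o' \<zeta>2) - ln (mink (r t) \<zeta>2)"
    using busemann_eq[OF assms(3,1) hyp] .
  ultimately show ?thesis using pos(1,2) by (simp add: r_def ln_mult)
qed

lemma not_tendsto_eventually_linear:
  fixes f :: "real \<Rightarrow> real"
  assumes "eventually (\<lambda>t. K + c * t = f t) at_top" "c > 0"
  shows "\<not> (\<exists>L. (f \<longlongrightarrow> L) at_top)"
proof -
  have "filterlim (\<lambda>t. K + c * t) at_top at_top" using assms(2) by real_asymp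
  hence "filterlim f at_top at_top" by (rule filterlim_mono_eventually[OF _ order_refl order_refl assms(1)])
  hence "filterlim f at_infinity at_top" by (rule filterlim_at_top_imp_at_infinity)
  thus ?thesis using not_tendsto_and_filterlim_at_infinity[of at_top f] by auto
qed

text \<open>When \<open>\<langle>\<zeta>\<^sub>1,\<zeta>\<^sub>2\<rangle> = 0\<close>, i.e. \<open>\<zeta>\<^sub>1 = \<zeta>\<^sub>2\<close>, the Busemann sum grows like \<open>2t\<close> and the
fallback value \<open>0\<close> in the definition of \<open>gromov\<close> agrees with the formula.\<close>

lemma gromov_sq_eq:
  assumes "o' \<in> hyp" "\<zeta>1 \<in> bdry" "\<zeta>2 \<in> bdry"
  shows "(gromov o' \<zeta>1 \<zeta>2)\<^sup>2 = mink \<zeta>1 \<zeta>2 / (2 * mink o' \<zeta>1 * mink o' \<zeta>2)"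
proof -
  define x where "x = some_ray \<zeta>1 0"
  define f where "f t = busemann \<zeta>1 o' (some_ray \<zeta>1 t) + busemann \<zeta>2 o' (some_ray \<zeta>1 t)" for t
  define C where "C = ln (mink o' \<zeta>1 * mink o' \<zeta>2)"
  define a where "a = mink x \<zeta>1 * mink x \<zeta>2"
  define c where "c = mink \<zeta>1 \<zeta>2"
  have a: "a > 0" unfolding a_def x_def using some_ray(1)[OF assms(2)]
    by (intro mult_pos_pos mink_hyp_bdry_pos assms(2,3)) (simp_all add: georay_def)
  have c: "c \<ge> 0" unfolding c_def by (rule mink_bdry_nonneg[OF assms(2,3)])
  have oo: "mink o' \<zeta>1 * mink o' \<zeta>2 > 0"
    using mink_hyp_bdry_pos[OF assms(1,2)] mink_hyp_bdry_pos[OF assms(1,3)] by simp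
  have f_ev: "eventually (\<lambda>t. f t = C + t - ln (a * exp (-t) + c * sinh t)) at_top"
    using eventually_ge_at_top[of 0]
  proof eventually_elim
    case (elim t)
    show ?case unfolding f_def C_def a_def c_def x_def by (rule busemann_sum_along_ray[OF assms elim])
  qed
  have gromov: "gromov o' \<zeta>1 \<zeta>2 = (if \<exists>L. (f \<longlongrightarrow> L) at_top then exp (- Lim at_top f / 2) else 0)"
    by (simp only: gromov_def f_def[abs_def] Let_def)
  show ?thesis
  proof (cases "c = 0")
    case True
    have "eventually (\<lambda>t. C - ln a + 2 * t = f t) at_top"
      using f_ev by eventually_elim (use a True in \<open>simp add: ln_mult\<close>)
    hence "\<not> (\<exists>L. (f \<longlongrightarrow> L) at_top)" by (rule not_tendsto_eventually_linear) simp
    thus ?thesis using True by (simp add: gromov c_def)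
  next
    case False
    define L where "L = C - ln (c / 2)"
    have "((\<lambda>t. C - (ln (a * exp (-t) + c * sinh t) - t)) \<longlongrightarrow> L) at_top"
      unfolding L_def using False c by (intro tendsto_intros tendsto_ln_minus_ident) simp
    hence "(f \<longlongrightarrow> L) at_top"
      by (rule Lim_transform_eventually) (use f_ev in \<open>eventually_elim, simp\<close>)
    hence "gromov o' \<zeta>1 \<zeta>2 = exp (- L / 2)" using gromov tendsto_Lim[of at_top f L] by auto
    hence "(gromov o' \<zeta>1 \<zeta>2)\<^sup>2 = exp (- L)" by (simp add: power2_eq_square flip: exp_add)
    also have "\<dots> = c / 2 / (mink o' \<zeta>1 * mink o' \<zeta>2)"
      using False c oo by (simp add: L_def C_def exp_diff)
    finally show ?thesis by (simp add: c_def mult.assoc)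
  qed
qed

lemma gromov_sq_normz:
  assumes "o' \<in> hyp" "mink P1 P1 = 0" "P1 $ None > 0" "mink P2 P2 = 0" "P2 $ None > 0"
  shows "(gromov o' (normz P1) (normz P2))\<^sup>2 = mink P1 P2 / (2 * mink o' P1 * mink o' P2)"
proof -
  have "mink o' P1 > 0" "mink o' P2 > 0" using mink_hyp_null_pos assms by auto
  thus ?thesis
    unfolding gromov_sq_eq[OF assms(1) bdry_normz[OF assms(2,3)] bdry_normz[OF assms(4,5)]]
    using assms(3,5) by (simp add: normz_def mink_linear field_simps)
qed

lemma htilde_eq:
  assumes "o' \<in> hyp" "infty \<in> bdry" "A \<in> SOn1" "\<xi> \<in> SOn1"
  shows "htilde o' infty A \<xi> = mink o' (A *v bd_act \<xi> infty) / mink o' (bd_act \<xi> infty)"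
proof -
  define q where "q = bd_act \<xi> infty"
  have q: "q \<in> bdry" unfolding q_def by (rule bd_act_bdry[OF assms(4,2)])
  note inv = SOn1_matrix_inv_hyp[OF assms(3,1)]
  have "mink o' (A *v q) > 0" "mink o' q > 0"
    using mink_hyp_bdry_pos[OF inv(1) q] mink_hyp_bdry_pos[OF assms(1) q] by (simp_all add: inv(2))
  thus ?thesis
    unfolding htilde_def q_def[symmetric] busemann_eq[OF q inv(1) assms(1)] by (simp add: inv(2) exp_diff)
qed

lemma gromov_sq_htilde_eq:
  assumes "o' \<in> hyp" "infty \<in> bdry" "A1 \<in> SOn1" "A2 \<in> SOn1" "\<xi>1 \<in> SOn1" "\<xi>2 \<in> SOn1"
  shows "(gromov o' (bd_act (A1 ** \<xi>1) infty) (bd_act (A2 ** \<xi>2) infty))\<^sup>2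
           * htilde o' infty A1 \<xi>1 * htilde o' infty A2 \<xi>2
       = mink (A1 *v bd_act \<xi>1 infty) (A2 *v bd_act \<xi>2 infty) /
           (2 * mink o' (bd_act \<xi>1 infty) * mink o' (bd_act \<xi>2 infty))"
proof -
  define q1 where "q1 = bd_act \<xi>1 infty"
  define q2 where "q2 = bd_act \<xi>2 infty"
  have q: "q1 \<in> bdry" "q2 \<in> bdry" using bd_act_bdry assms by (simp_all add: q1_def q2_def)
  note null1 = SOn1_bdry_null[OF assms(3) q(1)] SOn1_bdry_time_pos[OF assms(3) q(1)]
  note null2 = SOn1_bdry_null[OF assms(4) q(2)] SOn1_bdry_time_pos[OF assms(4) q(2)]
  have "mink o' (A1 *v q1) > 0" "mink o' (A2 *v q2) > 0"
    using mink_hyp_null_pos[OF assms(1) null1] mink_hyp_null_pos[OF assms(1) null2] by simp_all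
  moreover have "mink o' q1 > 0" "mink o' q2 > 0" using mink_hyp_bdry_pos[OF assms(1)] q by auto
  ultimately show ?thesis
    unfolding bd_act_mult[OF assms(3,5,2)] bd_act_mult[OF assms(4,6,2)]
      htilde_eq[OF assms(1,2,3,5)] htilde_eq[OF assms(1,2,4,6)] q1_def[symmetric] q2_def[symmetric]
      gromov_sq_normz[OF assms(1) null1 null2]
    by (simp add: field_simps)
qed

theorem proposition3p7:
  fixes o' infty :: "'n::finite mvec"
    and \<Gamma> \<Xi> :: "'n mmat set"
    and \<gamma> \<gamma>1 \<gamma>2 \<xi>1 \<xi>2 :: "'n mmat"
  assumes "CARD('n) \<ge> 2"
    and "o' \<in> hyp" and "infty \<in> bdry"
    and "discrete_subgroup \<Gamma>" and "finite_covolume \<Gamma>"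
    and "cusp_reps \<Gamma> infty \<Xi>"
    and "\<gamma> \<in> \<Gamma>" and "\<gamma>1 \<in> \<Gamma>" and "\<gamma>2 \<in> \<Gamma>" and "\<xi>1 \<in> \<Xi>" and "\<xi>2 \<in> \<Xi>"
  shows "(gromov o' (bd_act (\<gamma>1 ** \<xi>1) infty) (bd_act (\<gamma>2 ** \<xi>2) infty))\<^sup>2
           * htilde o' infty \<gamma>1 \<xi>1 * htilde o' infty \<gamma>2 \<xi>2
       = (gromov o' (bd_act (\<gamma> ** \<gamma>1 ** \<xi>1) infty) (bd_act (\<gamma> ** \<gamma>2 ** \<xi>2) infty))\<^sup>2
           * htilde o' infty (\<gamma> ** \<gamma>1) \<xi>1 * htilde o' infty (\<gamma> ** \<gamma>2) \<xi>2"
proof -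
  have "\<Gamma> \<subseteq> SOn1" "\<And>g h. g \<in> \<Gamma> \<Longrightarrow> h \<in> \<Gamma> \<Longrightarrow> g ** h \<in> \<Gamma>" "\<Xi> \<subseteq> SOn1"
    using assms(4,6) by (auto simp: discrete_subgroup_def cusp_reps_def)
  hence G: "\<gamma> \<in> SOn1" "\<gamma>1 \<in> SOn1" "\<gamma>2 \<in> SOn1" "\<gamma> ** \<gamma>1 \<in> SOn1" "\<gamma> ** \<gamma>2 \<in> SOn1"
    and X: "\<xi>1 \<in> SOn1" "\<xi>2 \<in> SOn1"
    using assms(7-11) by auto
  have "mink ((\<gamma> ** \<gamma>1) *v bd_act \<xi>1 infty) ((\<gamma> ** \<gamma>2) *v bd_act \<xi>2 infty)
      = mink (\<gamma>1 *v bd_act \<xi>1 infty) (\<gamma>2 *v bd_act \<xi>2 infty)"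
    by (simp add: SOn1_mink[OF G(1)] flip: matrix_vector_mul_assoc)
  thus ?thesis
    using gromov_sq_htilde_eq[OF assms(2,3) G(2,3) X] gromov_sq_htilde_eq[OF assms(2,3) G(4,5) X]
    by simp
qed

end
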